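(* Let $X$ be a real Banach space and $p:X\to\mathbb{R}$ be convex. Suppose there exist $x\in X$ and $\xi\ge0$ such that $|p(u)-p(x)|\le\xi\|u-x\|$ for all $u\in X$. Then $p$ is Lipschitz continuous on $X$ with constant $\xi$, and for any $u\in X$ and any $x^*\in\partial p(u)$ it holds $\|x^*\|\le\xi$.
   Context: For convex $p$, $\partial p(u):=\{x^*\in X^*\mid \langle x^*,v-u\rangle\le p(v)-p(u)\ \forall v\in X\}$. *)

theory Defs
  imports "HOL-Analysis.Analysis"
begin

(*The dual space X* is modelled by bounded linear functionals 'a =>L real,
whose norm is the operator norm. *)
definition subdiff :: "('a::real_normed_vector \<Rightarrow> real) \<Rightarrow> 'a \<Rightarrow> ('a \<Rightarrow>\<^sub>L real) set" where
  "subdiff p u = {xs. \<forall>v. blinfun_apply xs (v - u) \<le> p v - p u}"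

end

theory Submission
  imports Defs
begin

text \<open>A convex function lies above its secants outside the segment: with \<open>w = u + t (v - u)\<close>
  we get \<open>p v - p u \<le> (p w - p u) / t\<close>. If \<open>p\<close> grows at most like \<open>a + \<xi> \<parallel>w - x\<parallel>\<close>, the
  right-hand side is \<open>\<xi> \<parallel>v - u\<parallel> + O(1/t)\<close>, and letting \<open>t \<rightarrow> \<infinity>\<close> bounds every difference
  quotient by \<open>\<xi>\<close>.\<close>

lemma convex_on_diff_le_of_upper_cone:
  fixes p :: "'a::real_normed_vector \<Rightarrow> real"
  assumes convex: "convex_on UNIV p" and "\<xi> \<ge> 0"
    and cone: "\<And>w. p w \<le> a + \<xi> * norm (w - x)"
  shows "p v - p u \<le> \<xi> * norm (v - u)"
proof -
  define C where "C = a + \<xi> * norm (u - x) - p u"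
  have slack: "p v - p u \<le> \<xi> * norm (v - u) + C / real n" if "n \<ge> 1" for n :: nat
  proof -
    define t where "t = real n"
    have t: "t \<ge> 1" using that by (simp add: t_def)
    define w where "w = u + t *\<^sub>R (v - u)"
    have "v = (1 - 1/t) *\<^sub>R u + (1/t) *\<^sub>R w"
      using t by (simp add: w_def algebra_simps)
    hence "p v \<le> (1 - 1/t) * p u + (1/t) * p w"
      using convex_onD[OF convex, of "1/t" u w] t by simp
    hence "t * (p v - p u) \<le> p w - p u"
      using t by (simp add: field_simps)
    also have "p w \<le> a + \<xi> * norm (u - x) + \<xi> * (t * norm (v - u))"
    proof -
      have "norm (w - x) = norm ((u - x) + t *\<^sub>R (v - u))"
        by (simp add: w_def algebra_simps)
      also have "\<dots> \<le> norm (u - x) + t * norm (v - u)"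
        using norm_triangle_ineq[of "u - x" "t *\<^sub>R (v - u)"] t by simp
      finally have "norm (w - x) \<le> norm (u - x) + t * norm (v - u)" .
      thus ?thesis using cone[of w] mult_left_mono[OF _ \<open>\<xi> \<ge> 0\<close>] by (fastforce simp: algebra_simps)
    qed
    finally have "t * (p v - p u) \<le> t * (\<xi> * norm (v - u)) + C"
      by (simp add: C_def algebra_simps)
    thus ?thesis using t by (simp add: t_def field_simps)
  qed
  have "(\<lambda>n. \<xi> * norm (v - u) + C / real n) \<longlonglongrightarrow> \<xi> * norm (v - u) + 0"
    by (intro tendsto_intros)
  thus ?thesis using slack by (intro LIMSEQ_le_const[where a = "p v - p u"]) auto
qed

lemma convex_on_lipschitz_of_upper_cone:
  fixes p :: "'a::real_normed_vector \<Rightarrow> real"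
  assumes "convex_on UNIV p" and "\<xi> \<ge> 0"
    and "\<And>w. p w \<le> a + \<xi> * norm (w - x)"
  shows "\<xi>-lipschitz_on UNIV p"
proof (rule lipschitz_onI)
  fix u v :: 'a
  have "p u - p v \<le> \<xi> * norm (u - v)" "p v - p u \<le> \<xi> * norm (v - u)"
    by (rule convex_on_diff_le_of_upper_cone[OF assms])+
  thus "dist (p u) (p v) \<le> \<xi> * dist u v"
    by (simp add: dist_norm dist_real_def norm_minus_commute)
qed fact

lemma norm_le_if_in_subdiff_lipschitz:
  assumes "\<xi>-lipschitz_on UNIV p" and "xs \<in> subdiff p u"
  shows "norm xs \<le> \<xi>"
proof (rule norm_blinfun_bound[OF lipschitz_on_nonneg[OF assms(1)]])
  have bound: "blinfun_apply xs h \<le> \<xi> * norm h" for h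
  proof -
    have "blinfun_apply xs ((u + h) - u) \<le> p (u + h) - p u"
      using assms(2) unfolding subdiff_def by blast
    also have "\<dots> \<le> \<xi> * norm ((u + h) - u)"
      using lipschitz_on_normD[OF assms(1), of "u + h" u] by simp
    finally show ?thesis by simp
  qed
  fix h
  show "norm (blinfun_apply xs h) \<le> \<xi> * norm h"
    using bound[of h] bound[of "- h"] by (simp add: blinfun.minus_right)
qed

theorem mainTheorem5:
  fixes p :: "'a::banach \<Rightarrow> real" and x :: 'a and \<xi> :: real
  assumes "convex_on UNIV p"
    and "\<xi> \<ge> 0"
    and "\<forall>u. \<bar>p u - p x\<bar> \<le> \<xi> * norm (u - x)"
  shows "\<xi>-lipschitz_on UNIV p \<and> (\<forall>u. \<forall>xs \<in> subdiff p u. norm xs \<le> \<xi>)"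
proof -
  have "p w \<le> p x + \<xi> * norm (w - x)" for w
    using assms(3)[rule_format, of w] by (simp add: abs_le_iff)
  hence "\<xi>-lipschitz_on UNIV p"
    using convex_on_lipschitz_of_upper_cone[OF assms(1,2)] by blast
  thus ?thesis using norm_le_if_in_subdiff_lipschitz by blast
qed

end
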